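(* Let $M$ be a closed connected Riemannian manifold, identified with its image under the Kuratowski embedding $M \to L^\infty(M)$, $p \mapsto d(p,\cdot)$. Then for every $p \in M$, \[ \operatorname{reach}(p, M \subset L^\infty(M)) = 0. \]
   Context: $L^\infty(M)$ denotes the space of bounded real functions on $M$ with the sup-norm; $d$ is the Riemannian distance of $M$, and the Kuratowski embedding is isometric. For a metric space $(X,\operatorname{dist})$ and $A \subset X$, let $\operatorname{Unp}(A)$ be the set of $x \in X$ for which there exists a unique $a \in A$ with $\operatorname{dist}(x,A) = \operatorname{dist}(x,a)$. For $a \in A$, the reach of $A$ at $a$ is $\operatorname{reach}(a,A) = \sup\{r \geq 0 : B_r(a) \subset \operatorname{Unp}(A)\}$, where $B_r(a)$ is the open ball of radius $r$ about $a$ in $X$. *)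

theory Defs
  imports "HOL-Analysis.Analysis"
begin

fun Ck_on :: "nat \<Rightarrow> 'b::euclidean_space set \<Rightarrow> ('b \<Rightarrow> 'c::real_normed_vector) \<Rightarrow> bool" where
  "Ck_on 0 S f = continuous_on S f"
| "Ck_on (Suc k) S f =
     (\<exists>f'. (\<forall>x\<in>S. (f has_derivative f' x) (at x)) \<and> (\<forall>v. Ck_on k S (\<lambda>x. f' x v)))"

definition smooth_on :: "'b::euclidean_space set \<Rightarrow> ('b \<Rightarrow> 'c::real_normed_vector) \<Rightarrow> bool" where
  "smooth_on S f \<longleftrightarrow> (\<forall>k. Ck_on k S f)"

text \<open>A chart with its metric: (U, phi, psi, g) where phi : U -> phi(U) open in the model
  space 'b, psi its inverse, and g y v w the Riemannian metric at the point psi y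
  in these coordinates.\<close>
type_synonym ('a, 'b) rchart = "'a set \<times> ('a \<Rightarrow> 'b) \<times> ('b \<Rightarrow> 'a) \<times> ('b \<Rightarrow> 'b \<Rightarrow> 'b \<Rightarrow> real)"

definition ch_dom :: "('a, 'b) rchart \<Rightarrow> 'a set" where "ch_dom c = fst c"
definition ch_map :: "('a, 'b) rchart \<Rightarrow> 'a \<Rightarrow> 'b" where "ch_map c = fst (snd c)"
definition ch_inv :: "('a, 'b) rchart \<Rightarrow> 'b \<Rightarrow> 'a" where "ch_inv c = fst (snd (snd c))"
definition ch_metric :: "('a, 'b) rchart \<Rightarrow> 'b \<Rightarrow> 'b \<Rightarrow> 'b \<Rightarrow> real" where
  "ch_metric c = snd (snd (snd c))"

definition riemannian_atlas :: "('a::t2_space, 'b::euclidean_space) rchart set \<Rightarrow> bool" where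
  "riemannian_atlas A \<longleftrightarrow>
     (\<Union>c\<in>A. ch_dom c) = UNIV \<and>
     (\<forall>c\<in>A. open (ch_dom c) \<and> open (ch_map c ` ch_dom c) \<and>
        homeomorphism (ch_dom c) (ch_map c ` ch_dom c) (ch_map c) (ch_inv c)) \<and>
     (\<forall>c\<in>A. \<forall>c'\<in>A.
        smooth_on (ch_map c ` (ch_dom c \<inter> ch_dom c')) (ch_map c' \<circ> ch_inv c)) \<and>
     (\<forall>c\<in>A. (\<forall>v w. smooth_on (ch_map c ` ch_dom c) (\<lambda>y. ch_metric c y v w)) \<and>
        (\<forall>y\<in>ch_map c ` ch_dom c. bilinear (ch_metric c y) \<and>
            (\<forall>v w. ch_metric c y v w = ch_metric c y w v) \<and>
            (\<forall>v. v \<noteq> 0 \<longrightarrow> ch_metric c y v v > 0))) \<and>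
     (\<forall>c\<in>A. \<forall>c'\<in>A. \<forall>y\<in>ch_map c ` (ch_dom c \<inter> ch_dom c'). \<forall>D v w.
        ((ch_map c' \<circ> ch_inv c) has_derivative D) (at y) \<longrightarrow>
        ch_metric c y v w = ch_metric c' (ch_map c' (ch_inv c y)) (D v) (D w))"

definition closed_connected_riemannian_manifold ::
    "('a::t2_space, 'b::euclidean_space) rchart set \<Rightarrow> bool" where
  "closed_connected_riemannian_manifold A \<longleftrightarrow>
     compact (UNIV :: 'a set) \<and> connected (UNIV :: 'a set) \<and> riemannian_atlas A"

definition piece_deriv ::
    "('a, 'b::euclidean_space) rchart \<Rightarrow> (real \<Rightarrow> 'a) \<Rightarrow> real \<Rightarrow> real \<Rightarrow> real \<Rightarrow> 'b" where
  "piece_deriv c \<gamma> a b s = vector_derivative (ch_map c \<circ> \<gamma>) (at s within {a..b})"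

definition admissible_decomp ::
    "('a::t2_space, 'b::euclidean_space) rchart set \<Rightarrow> (real \<Rightarrow> 'a) \<Rightarrow> nat \<Rightarrow> (nat \<Rightarrow> real)
       \<Rightarrow> (nat \<Rightarrow> ('a, 'b) rchart) \<Rightarrow> bool" where
  "admissible_decomp A \<gamma> n t c \<longleftrightarrow>
     continuous_on {0..1} \<gamma> \<and> t 0 = 0 \<and> t n = 1 \<and>
     (\<forall>i<n. t i < t (Suc i) \<and> c i \<in> A \<and> \<gamma> ` {t i..t (Suc i)} \<subseteq> ch_dom (c i) \<and>
        (\<exists>D. continuous_on {t i..t (Suc i)} D \<and>
           (\<forall>s\<in>{t i..t (Suc i)}.
              ((ch_map (c i) \<circ> \<gamma>) has_vector_derivative D s) (at s within {t i..t (Suc i)}))))"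

definition decomp_length ::
    "(real \<Rightarrow> 'a) \<Rightarrow> nat \<Rightarrow> (nat \<Rightarrow> real) \<Rightarrow> (nat \<Rightarrow> ('a, 'b::euclidean_space) rchart) \<Rightarrow> real" where
  "decomp_length \<gamma> n t c =
     (\<Sum>i<n. integral {t i..t (Suc i)}
        (\<lambda>s. sqrt (ch_metric (c i) (ch_map (c i) (\<gamma> s))
                 (piece_deriv (c i) \<gamma> (t i) (t (Suc i)) s)
                 (piece_deriv (c i) \<gamma> (t i) (t (Suc i)) s))))"

definition riem_dist :: "('a::t2_space, 'b::euclidean_space) rchart set \<Rightarrow> 'a \<Rightarrow> 'a \<Rightarrow> real" where
  "riem_dist A p q = Inf {decomp_length \<gamma> n t c | \<gamma> n t c.
       admissible_decomp A \<gamma> n t c \<and> \<gamma> 0 = p \<and> \<gamma> 1 = q}"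

definition Linf :: "('a \<Rightarrow> real) set" where
  "Linf = {f. bounded (range f)}"

definition sup_dist :: "('a \<Rightarrow> real) \<Rightarrow> ('a \<Rightarrow> real) \<Rightarrow> real" where
  "sup_dist f g = (SUP x. \<bar>f x - g x\<bar>)"

definition kuratowski :: "('a::t2_space, 'b::euclidean_space) rchart set \<Rightarrow> 'a \<Rightarrow> ('a \<Rightarrow> real)" where
  "kuratowski A p = (\<lambda>x. riem_dist A p x)"

definition set_dist :: "('x \<Rightarrow> 'x \<Rightarrow> real) \<Rightarrow> 'x \<Rightarrow> 'x set \<Rightarrow> real" where
  "set_dist dst x S = (INF a\<in>S. dst x a)"

definition Unp :: "'x set \<Rightarrow> ('x \<Rightarrow> 'x \<Rightarrow> real) \<Rightarrow> 'x set \<Rightarrow> 'x set" where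
  "Unp X dst S = {x \<in> X. \<exists>!a. a \<in> S \<and> set_dist dst x S = dst x a}"

definition open_ball :: "'x set \<Rightarrow> ('x \<Rightarrow> 'x \<Rightarrow> real) \<Rightarrow> 'x \<Rightarrow> real \<Rightarrow> 'x set" where
  "open_ball X dst a r = {x \<in> X. dst a x < r}"

definition reach :: "'x set \<Rightarrow> ('x \<Rightarrow> 'x \<Rightarrow> real) \<Rightarrow> 'x \<Rightarrow> 'x set \<Rightarrow> ereal" where
  "reach X dst a S = Sup {ereal r | r. r \<ge> 0 \<and> open_ball X dst a r \<subseteq> Unp X dst S}"

end

theory Submission
  imports Defs
begin

text \<open>Write \<open>k p = d p\<close> for the Kuratowski image of \<open>p\<close>. If \<open>k p \<noteq> k q\<close> and \<open>\<rho>\<close> is half their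
  sup-distance, the function \<open>f = max \<rho> (max (k p) (k q) - \<rho>)\<close> lies within \<open>\<rho>\<close> of both \<open>k p\<close>
  and \<open>k q\<close>, while \<open>f \<ge> \<rho>\<close> everywhere and \<open>k z z = 0\<close> keep it at distance at least \<open>\<rho>\<close> from
  every \<open>k z\<close>: \<open>f\<close> has two nearest points on the image of \<open>M\<close>. The sup-distance of \<open>k p\<close> and
  \<open>k q\<close> is at most \<open>max (d p q) (d q p)\<close>, so every ball around \<open>k p\<close> contains such an \<open>f\<close> once
  \<open>p\<close> is a limit of points at positive distance from it. For the Riemannian distance this holds
  because in a chart \<open>d\<close> is squeezed between two multiples of the Euclidean distance: straight
  segments give the upper bound, a first-exit-time argument the lower one. Connectedness makes
  \<open>d\<close> finite (concatenating curves gives the triangle inequality), compactness makes it bounded.\<close>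

section \<open>Bilinear forms depending continuously on a parameter\<close>

lemma bilinear_expansion:
  fixes B :: "'b::euclidean_space \<Rightarrow> 'b \<Rightarrow> real"
  assumes "bilinear B"
  shows "B v w = (\<Sum>(i,j)\<in>Basis \<times> Basis. (v \<bullet> i) * (w \<bullet> j) * B i j)"
proof -
  have "B v w = B (\<Sum>i\<in>Basis. (v \<bullet> i) *\<^sub>R i) (\<Sum>j\<in>Basis. (w \<bullet> j) *\<^sub>R j)"
    by (simp only: euclidean_representation)
  also have "\<dots> = (\<Sum>(i,j)\<in>Basis \<times> Basis. B ((v \<bullet> i) *\<^sub>R i) ((w \<bullet> j) *\<^sub>R j))"
    by (rule bilinear_sum[OF assms])
  also have "\<dots> = (\<Sum>(i,j)\<in>Basis \<times> Basis. (v \<bullet> i) * (w \<bullet> j) * B i j)"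
    by (rule sum.cong) (auto simp: bilinear_lmul[OF assms] bilinear_rmul[OF assms])
  finally show ?thesis .
qed

lemma continuous_on_bilinear_family:
  fixes B :: "'c::topological_space \<Rightarrow> 'b::euclidean_space \<Rightarrow> 'b \<Rightarrow> real"
  assumes bil: "\<And>y. y \<in> T \<Longrightarrow> bilinear (B y)"
    and coeff: "\<And>i j. continuous_on T (\<lambda>y. B y i j)"
    and y: "continuous_on S y" "y ` S \<subseteq> T"
    and v: "continuous_on S v" and w: "continuous_on S w"
  shows "continuous_on S (\<lambda>s. B (y s) (v s) (w s))"
proof -
  have "continuous_on S (\<lambda>s. \<Sum>(i,j)\<in>Basis \<times> Basis. (v s \<bullet> i) * (w s \<bullet> j) * B (y s) i j)"
  proof (rule continuous_on_sum, clarify)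
    fix i j :: 'b
    show "continuous_on S (\<lambda>s. (v s \<bullet> i) * (w s \<bullet> j) * B (y s) i j)"
      by (intro continuous_on_mult continuous_on_inner v w continuous_on_const
          continuous_on_compose2[OF coeff y])
  qed
  moreover have "(\<Sum>(i,j)\<in>Basis \<times> Basis. (v s \<bullet> i) * (w s \<bullet> j) * B (y s) i j) = B (y s) (v s) (w s)"
    if "s \<in> S" for s
  proof -
    have "y s \<in> T" using y(2) that by blast
    then show ?thesis by (rule bilinear_expansion[OF bil, symmetric])
  qed
  ultimately show ?thesis by (rule continuous_on_eq) simp
qed

lemma bilinear_quadratic_bounds:
  fixes B :: "'b::real_normed_vector \<Rightarrow> 'b \<Rightarrow> real"
  assumes B: "bilinear B" and sphere: "\<And>u. norm u = 1 \<Longrightarrow> l \<le> B u u \<and> B u u \<le> L"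
  shows "l * (norm v)\<^sup>2 \<le> B v v \<and> B v v \<le> L * (norm v)\<^sup>2"
proof (cases "v = 0")
  case True
  then show ?thesis using B by (simp add: bilinear_lzero)
next
  case False
  define u where "u = v /\<^sub>R norm v"
  have "B v v = B (norm v *\<^sub>R u) (norm v *\<^sub>R u)" using False by (simp add: u_def)
  also have "\<dots> = (norm v)\<^sup>2 * B u u"
    using B by (simp add: bilinear_lmul bilinear_rmul power2_eq_square)
  finally have "B v v = (norm v)\<^sup>2 * B u u" .
  moreover have "l \<le> B u u" "B u u \<le> L" using sphere[of u] False by (auto simp: u_def)
  ultimately show ?thesis by (simp add: mult.commute mult_right_mono)
qed

text \<open>The constants are the extreme values of \<open>B y u u\<close> on the compact set \<open>K \<times> sphere 0 1\<close>.\<close>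

lemma bilinear_family_bounds:
  fixes B :: "'c::topological_space \<Rightarrow> 'b::euclidean_space \<Rightarrow> 'b \<Rightarrow> real"
  assumes K: "compact K"
    and bil: "\<And>y. y \<in> K \<Longrightarrow> bilinear (B y)"
    and coeff: "\<And>i j. continuous_on K (\<lambda>y. B y i j)"
    and pos: "\<And>y v. y \<in> K \<Longrightarrow> v \<noteq> 0 \<Longrightarrow> 0 < B y v v"
  obtains l L where "0 < l" "0 < L"
    "\<And>y v. y \<in> K \<Longrightarrow> l * (norm v)\<^sup>2 \<le> B y v v"
    "\<And>y v. y \<in> K \<Longrightarrow> B y v v \<le> L * (norm v)\<^sup>2"
proof (cases "K = {}")
  case True
  then show ?thesis using that[of 1 1] by simp
next
  case False
  define S where "S = K \<times> sphere (0::'b) 1"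
  define q where "q z = B (fst z) (snd z) (snd z)" for z
  obtain b :: 'b where "b \<in> Basis" using nonempty_Basis by blast
  then have "S \<noteq> {}" using False unfolding S_def by fastforce
  moreover have "compact S" unfolding S_def using K by (intro compact_Times compact_sphere)
  moreover have "continuous_on S q"
    unfolding q_def
    by (rule continuous_on_bilinear_family[OF bil coeff])
      (auto simp: S_def intro: continuous_on_fst continuous_on_snd continuous_on_id)
  ultimately obtain z1 z2 where z: "z1 \<in> S" "z2 \<in> S" "\<And>z. z \<in> S \<Longrightarrow> q z1 \<le> q z \<and> q z \<le> q z2"
    using continuous_attains_inf[of S q] continuous_attains_sup[of S q] by blast
  have l: "0 < q z1" using z(1) unfolding S_def q_def by (auto intro: pos)
  have "q z1 * (norm v)\<^sup>2 \<le> B y v v \<and> B y v v \<le> q z2 * (norm v)\<^sup>2" if "y \<in> K" for y v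
    using z(3) that by (intro bilinear_quadratic_bounds[OF bil]) (auto simp: S_def q_def)
  moreover have "0 < q z2" using l z(3)[OF z(1)] by linarith
  ultimately show ?thesis using l that by blast
qed

section \<open>Admissible curves\<close>

definition chart_piece ::
    "('a::t2_space, 'b::euclidean_space) rchart set \<Rightarrow> (real \<Rightarrow> 'a) \<Rightarrow> real \<Rightarrow> real
       \<Rightarrow> ('a, 'b) rchart \<Rightarrow> (real \<Rightarrow> 'b) \<Rightarrow> bool" where
  "chart_piece A \<gamma> a b c D \<longleftrightarrow> a < b \<and> c \<in> A \<and> \<gamma> ` {a..b} \<subseteq> ch_dom c \<and>
     continuous_on {a..b} \<gamma> \<and> continuous_on {a..b} D \<and>
     (\<forall>s\<in>{a..b}. ((ch_map c \<circ> \<gamma>) has_vector_derivative D s) (at s within {a..b}))"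

definition chart_speed ::
    "('a, 'b::euclidean_space) rchart \<Rightarrow> (real \<Rightarrow> 'a) \<Rightarrow> real \<Rightarrow> real \<Rightarrow> real \<Rightarrow> real" where
  "chart_speed c \<gamma> a b s =
     sqrt (ch_metric c (ch_map c (\<gamma> s)) (piece_deriv c \<gamma> a b s) (piece_deriv c \<gamma> a b s))"

definition piece_length ::
    "(real \<Rightarrow> 'a) \<Rightarrow> (nat \<Rightarrow> real) \<Rightarrow> (nat \<Rightarrow> ('a, 'b::euclidean_space) rchart) \<Rightarrow> nat \<Rightarrow> real" where
  "piece_length \<gamma> t c i = integral {t i..t (Suc i)} (chart_speed (c i) \<gamma> (t i) (t (Suc i)))"

text \<open>Since \<open>riem_dist\<close> is an infimum over admissible curves, it is the unspecified value
  \<open>Inf {}\<close> for points that no such curve joins; hence the hypotheses \<open>joinable\<close> below.\<close>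

definition joinable :: "('a::t2_space, 'b::euclidean_space) rchart set \<Rightarrow> 'a \<Rightarrow> 'a \<Rightarrow> bool" where
  "joinable A x y \<longleftrightarrow> (\<exists>\<gamma> n t c. admissible_decomp A \<gamma> n t c \<and> \<gamma> 0 = x \<and> \<gamma> 1 = y)"

definition join_breaks :: "nat \<Rightarrow> (nat \<Rightarrow> real) \<Rightarrow> (nat \<Rightarrow> real) \<Rightarrow> nat \<Rightarrow> real" where
  "join_breaks n1 t1 t2 i = (if i \<le> n1 then t1 i / 2 else (t2 (i - n1) + 1) / 2)"

definition join_charts :: "nat \<Rightarrow> (nat \<Rightarrow> 'c) \<Rightarrow> (nat \<Rightarrow> 'c) \<Rightarrow> nat \<Rightarrow> 'c" where
  "join_charts n1 c1 c2 i = (if i < n1 then c1 i else c2 (i - n1))"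

lemma decomp_length_eq_sum: "decomp_length \<gamma> n t c = (\<Sum>i<n. piece_length \<gamma> t c i)"
  unfolding decomp_length_def piece_length_def chart_speed_def by simp

lemma admissible_decomp_mono:
  assumes "admissible_decomp A \<gamma> n t c" "i \<le> j" "j \<le> n"
  shows "t i \<le> t j"
  using assms(2,3)
proof (induction j)
  case (Suc j)
  show ?case
  proof (cases "i = Suc j")
    case False
    then have "t i \<le> t j" using Suc by simp
    moreover have "t j < t (Suc j)" using assms(1) Suc.prems unfolding admissible_decomp_def by simp
    ultimately show ?thesis by simp
  qed simp
qed simp

lemma admissible_decomp_bounds:
  assumes "admissible_decomp A \<gamma> n t c" "i \<le> n"
  shows "0 \<le> t i" "t i \<le> 1"
  using admissible_decomp_mono[OF assms(1), of 0 i] admissible_decomp_mono[OF assms(1), of i n] assms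
  unfolding admissible_decomp_def by auto

lemma admissible_decomp_pos: "admissible_decomp A \<gamma> n t c \<Longrightarrow> 0 < n"
  unfolding admissible_decomp_def by (cases n) auto

lemma admissible_decomp_piece:
  assumes "admissible_decomp A \<gamma> n t c" "i < n"
  obtains D where "chart_piece A \<gamma> (t i) (t (Suc i)) (c i) D"
proof -
  have "{t i..t (Suc i)} \<subseteq> {0..1}"
    using admissible_decomp_bounds[OF assms(1), of i] admissible_decomp_bounds[OF assms(1), of "Suc i"]
      assms(2) by auto
  then have "continuous_on {t i..t (Suc i)} \<gamma>"
    using assms(1) continuous_on_subset unfolding admissible_decomp_def by blast
  then show ?thesis using assms that unfolding admissible_decomp_def chart_piece_def by auto
qed

lemma admissible_decompI:
  assumes "continuous_on {0..1} \<gamma>" "t 0 = 0" "t n = 1"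
    and "\<And>i. i < n \<Longrightarrow> \<exists>D. chart_piece A \<gamma> (t i) (t (Suc i)) (c i) D"
  shows "admissible_decomp A \<gamma> n t c"
  using assms unfolding admissible_decomp_def chart_piece_def by metis

lemma chart_speed_eq:
  assumes "chart_piece A \<gamma> a b c D" "s \<in> {a..b}"
  shows "chart_speed c \<gamma> a b s = sqrt (ch_metric c (ch_map c (\<gamma> s)) (D s) (D s))"
proof -
  have "piece_deriv c \<gamma> a b s = D s"
    using assms unfolding chart_piece_def piece_deriv_def
    by (metis box_real(2) vector_derivative_within_cbox)
  then show ?thesis unfolding chart_speed_def by simp
qed

lemma riem_dist_greatest:
  assumes "joinable A x y"
    and "\<And>\<gamma> n t c. admissible_decomp A \<gamma> n t c \<Longrightarrow> \<gamma> 0 = x \<Longrightarrow> \<gamma> 1 = y \<Longrightarrow> m \<le> decomp_length \<gamma> n t c"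
  shows "m \<le> riem_dist A x y"
  unfolding riem_dist_def
proof (rule cInf_greatest)
  show "{decomp_length \<gamma> n t c |\<gamma> n t c. admissible_decomp A \<gamma> n t c \<and> \<gamma> 0 = x \<and> \<gamma> 1 = y} \<noteq> {}"
    using assms(1) unfolding joinable_def by blast
qed (use assms(2) in blast)

locale riemannian =
  fixes A :: "('a::t2_space, 'b::euclidean_space) rchart set"
  assumes atlas: "riemannian_atlas A"
begin

lemma chart_homeomorphism:
  "c \<in> A \<Longrightarrow> homeomorphism (ch_dom c) (ch_map c ` ch_dom c) (ch_map c) (ch_inv c)"
  using atlas unfolding riemannian_atlas_def by blast

lemma chart_inv_in_dom:
  assumes "c \<in> A" "y \<in> ch_map c ` ch_dom c"
  shows "ch_inv c y \<in> ch_dom c" "ch_map c (ch_inv c y) = y"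
proof -
  note hom = chart_homeomorphism[OF assms(1)]
  have "ch_inv c y \<in> ch_inv c ` (ch_map c ` ch_dom c)" using assms(2) by (rule imageI)
  then show "ch_inv c y \<in> ch_dom c" unfolding homeomorphism_image2[OF hom] .
  show "ch_map c (ch_inv c y) = y" by (rule homeomorphism_apply2[OF hom assms(2)])
qed

lemma chart_map_inv: "c \<in> A \<Longrightarrow> x \<in> ch_dom c \<Longrightarrow> ch_inv c (ch_map c x) = x"
  by (rule homeomorphism_apply1[OF chart_homeomorphism])

lemma open_chart_image: "c \<in> A \<Longrightarrow> open (ch_map c ` ch_dom c)"
  using atlas unfolding riemannian_atlas_def by blast

lemma open_chart_preimage:
  assumes "c \<in> A" "open B"
  shows "open (ch_dom c \<inter> ch_map c -` B)"
proof -
  have "open (ch_dom c)" using atlas assms(1) unfolding riemannian_atlas_def by blast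
  then have "open (ch_map c -` B \<inter> ch_dom c)"
    using homeomorphism_cont1[OF chart_homeomorphism[OF assms(1)]] assms(2) continuous_on_open_vimage
    by blast
  then show ?thesis by (simp add: Int_commute)
qed

lemma chart_metric_bilinear:
  "c \<in> A \<Longrightarrow> y \<in> ch_map c ` ch_dom c \<Longrightarrow> bilinear (ch_metric c y)"
  using atlas unfolding riemannian_atlas_def by blast

lemma chart_metric_pos:
  "c \<in> A \<Longrightarrow> y \<in> ch_map c ` ch_dom c \<Longrightarrow> v \<noteq> 0 \<Longrightarrow> 0 < ch_metric c y v v"
  using atlas unfolding riemannian_atlas_def by blast

lemma chart_metric_nonneg:
  "c \<in> A \<Longrightarrow> y \<in> ch_map c ` ch_dom c \<Longrightarrow> 0 \<le> ch_metric c y v v"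
  using chart_metric_pos[of c y v] bilinear_lzero[OF chart_metric_bilinear, of c y]
  by (cases "v = 0") auto

lemma continuous_on_chart_metric:
  assumes "c \<in> A"
  shows "continuous_on (ch_map c ` ch_dom c) (\<lambda>y. ch_metric c y v w)"
proof -
  have "smooth_on (ch_map c ` ch_dom c) (\<lambda>y. ch_metric c y v w)"
    using atlas assms unfolding riemannian_atlas_def by blast
  then show ?thesis unfolding smooth_on_def by (metis Ck_on.simps(1))
qed

lemma chart_transition:
  assumes "c \<in> A" "c' \<in> A"
  obtains T' where
    "\<And>y. y \<in> ch_map c ` (ch_dom c \<inter> ch_dom c') \<Longrightarrow>
        ((ch_map c' \<circ> ch_inv c) has_derivative T' y) (at y)"
    "\<And>y v w. y \<in> ch_map c ` (ch_dom c \<inter> ch_dom c') \<Longrightarrow>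
        ch_metric c y v w = ch_metric c' (ch_map c' (ch_inv c y)) (T' y v) (T' y w)"
proof -
  have "smooth_on (ch_map c ` (ch_dom c \<inter> ch_dom c')) (ch_map c' \<circ> ch_inv c)"
    using atlas assms unfolding riemannian_atlas_def by blast
  then have "Ck_on (Suc 0) (ch_map c ` (ch_dom c \<inter> ch_dom c')) (ch_map c' \<circ> ch_inv c)"
    unfolding smooth_on_def by blast
  then obtain T' where T': "\<And>y. y \<in> ch_map c ` (ch_dom c \<inter> ch_dom c') \<Longrightarrow>
        ((ch_map c' \<circ> ch_inv c) has_derivative T' y) (at y)" by auto
  moreover have "ch_metric c y v w = ch_metric c' (ch_map c' (ch_inv c y)) (T' y v) (T' y w)"
    if "y \<in> ch_map c ` (ch_dom c \<inter> ch_dom c')" for y v w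
    using atlas assms T'[OF that] that unfolding riemannian_atlas_def by blast
  ultimately show ?thesis using that by blast
qed

lemma chart_metric_bounds:
  assumes "c \<in> A" "compact K" "K \<subseteq> ch_map c ` ch_dom c"
  obtains l L where "0 < l" "0 < L"
    "\<And>y v. y \<in> K \<Longrightarrow> l * (norm v)\<^sup>2 \<le> ch_metric c y v v"
    "\<And>y v. y \<in> K \<Longrightarrow> ch_metric c y v v \<le> L * (norm v)\<^sup>2"
proof -
  have "bilinear (ch_metric c y)" if "y \<in> K" for y
    using assms that by (blast intro: chart_metric_bilinear)
  moreover have "continuous_on K (\<lambda>y. ch_metric c y i j)" for i j
    using continuous_on_subset[OF continuous_on_chart_metric[OF assms(1)] assms(3)] .
  moreover have "0 < ch_metric c y v v" if "y \<in> K" "v \<noteq> 0" for y v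
    using assms that by (blast intro: chart_metric_pos)
  ultimately show ?thesis by (rule bilinear_family_bounds[OF assms(2) _ _ _ that])
qed

lemma chart_ball_metric_bounds:
  obtains c R l L where "c \<in> A" "x \<in> ch_dom c" "0 < R" "cball (ch_map c x) R \<subseteq> ch_map c ` ch_dom c"
    "0 < l" "0 < L"
    "\<And>y v. y \<in> cball (ch_map c x) R \<Longrightarrow> l * (norm v)\<^sup>2 \<le> ch_metric c y v v"
    "\<And>y v. y \<in> cball (ch_map c x) R \<Longrightarrow> ch_metric c y v v \<le> L * (norm v)\<^sup>2"
proof -
  obtain c where c: "c \<in> A" "x \<in> ch_dom c"
    using atlas unfolding riemannian_atlas_def by blast
  then obtain R where R: "0 < R" "cball (ch_map c x) R \<subseteq> ch_map c ` ch_dom c"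
    using open_chart_image open_contains_cball by blast
  show ?thesis by (rule chart_metric_bounds[OF c(1) compact_cball R(2)], rule that[OF c R])
qed

lemma chart_speed_continuous:
  assumes "chart_piece A \<gamma> a b c D"
  shows "continuous_on {a..b} (chart_speed c \<gamma> a b)"
proof -
  have c: "c \<in> A" and \<gamma>: "continuous_on {a..b} \<gamma>" "\<gamma> ` {a..b} \<subseteq> ch_dom c"
    and D: "continuous_on {a..b} D"
    using assms unfolding chart_piece_def by auto
  have cont: "continuous_on {a..b} (\<lambda>s. ch_map c (\<gamma> s))"
    using continuous_on_compose2[OF homeomorphism_cont1[OF chart_homeomorphism[OF c]] \<gamma>] by blast
  have "continuous_on {a..b} (\<lambda>s. ch_metric c (ch_map c (\<gamma> s)) (D s) (D s))"
  proof (rule continuous_on_bilinear_family[of "ch_map c ` ch_dom c" "ch_metric c" "{a..b}"])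
    show "bilinear (ch_metric c y)" if "y \<in> ch_map c ` ch_dom c" for y
      using chart_metric_bilinear[OF c that] .
    show "continuous_on (ch_map c ` ch_dom c) (\<lambda>y. ch_metric c y i j)" for i j
      by (rule continuous_on_chart_metric[OF c])
  qed (use cont \<gamma>(2) D in auto)
  then have "continuous_on {a..b} (\<lambda>s. sqrt (ch_metric c (ch_map c (\<gamma> s)) (D s) (D s)))"
    by (rule continuous_on_real_sqrt)
  then show ?thesis by (rule continuous_on_eq) (simp add: chart_speed_eq[OF assms])
qed

lemma chart_speed_integrable:
  "chart_piece A \<gamma> a b c D \<Longrightarrow> chart_speed c \<gamma> a b integrable_on {a..b}"
  by (rule integrable_continuous_interval[OF chart_speed_continuous])

lemma chart_speed_nonneg:
  assumes "chart_piece A \<gamma> a b c D" "s \<in> {a..b}"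
  shows "0 \<le> chart_speed c \<gamma> a b s"
proof -
  have "c \<in> A" "\<gamma> s \<in> ch_dom c"
    using assms unfolding chart_piece_def by auto
  then show ?thesis unfolding chart_speed_def by (simp add: chart_metric_nonneg)
qed

lemma integral_chart_speed_nonneg:
  "chart_piece A \<gamma> a b c D \<Longrightarrow> 0 \<le> integral {a..b} (chart_speed c \<gamma> a b)"
  by (rule integral_nonneg[OF chart_speed_integrable chart_speed_nonneg])

lemma piece_length_nonneg:
  assumes "admissible_decomp A \<gamma> n t c" "i < n"
  shows "0 \<le> piece_length \<gamma> t c i"
proof -
  obtain D where "chart_piece A \<gamma> (t i) (t (Suc i)) (c i) D"
    using admissible_decomp_piece[OF assms] by blast
  then show ?thesis unfolding piece_length_def by (rule integral_chart_speed_nonneg)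
qed

lemma decomp_length_nonneg:
  "admissible_decomp A \<gamma> n t c \<Longrightarrow> 0 \<le> decomp_length \<gamma> n t c"
  unfolding decomp_length_eq_sum by (rule sum_nonneg) (simp add: piece_length_nonneg)

lemma riem_dist_le_length:
  assumes "admissible_decomp A \<gamma> n t c" "\<gamma> 0 = x" "\<gamma> 1 = y"
  shows "riem_dist A x y \<le> decomp_length \<gamma> n t c"
  unfolding riem_dist_def
  by (rule cInf_lower) (use assms decomp_length_nonneg in \<open>auto intro!: bdd_belowI[of _ 0]\<close>)

lemma riem_dist_nonneg:
  assumes "joinable A x y"
  shows "0 \<le> riem_dist A x y"
  by (rule riem_dist_greatest[OF assms]) (rule decomp_length_nonneg)

section \<open>Straight segments in a chart\<close>

lemma chart_segment_curve:
  assumes c: "c \<in> A" and seg: "closed_segment y1 y2 \<subseteq> ch_map c ` ch_dom c"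
    and bnd: "\<And>y. y \<in> closed_segment y1 y2 \<Longrightarrow>
                ch_metric c y (y2 - y1) (y2 - y1) \<le> L * (norm (y2 - y1))\<^sup>2"
  obtains \<gamma> n t cs where "admissible_decomp A \<gamma> n t cs" "\<gamma> 0 = ch_inv c y1" "\<gamma> 1 = ch_inv c y2"
    "decomp_length \<gamma> n t cs \<le> sqrt L * norm (y2 - y1)"
proof -
  define \<gamma> where "\<gamma> = ch_inv c \<circ> linepath y1 y2"
  note hom = chart_homeomorphism[OF c]
  have lin: "linepath y1 y2 s \<in> ch_map c ` ch_dom c" if "s \<in> {0..1}" for s
    using seg linepath_in_path[OF that] by blast
  have \<gamma>_cont: "continuous_on {0..1} \<gamma>"
    unfolding \<gamma>_def using lin
    by (intro continuous_on_compose continuous_on_linepath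
        continuous_on_subset[OF homeomorphism_cont2[OF hom]]) auto
  have \<gamma>_dom: "\<gamma> ` {0..1} \<subseteq> ch_dom c"
    unfolding \<gamma>_def using lin homeomorphism_image2[OF hom] by auto
  have chart_\<gamma>: "(ch_map c \<circ> \<gamma>) s = linepath y1 y2 s" if "s \<in> {0..1}" for s
    unfolding \<gamma>_def using homeomorphism_apply2[OF hom lin[OF that]] by simp
  have "((ch_map c \<circ> \<gamma>) has_vector_derivative y2 - y1) (at s within {0..1})" if "s \<in> {0..1}" for s
    using has_vector_derivative_transform[OF that chart_\<gamma> has_vector_derivative_linepath_within] .
  then have piece: "chart_piece A \<gamma> 0 1 c (\<lambda>_. y2 - y1)"
    unfolding chart_piece_def using c \<gamma>_dom \<gamma>_cont by simp
  have adm: "admissible_decomp A \<gamma> 1 real (\<lambda>_. c)"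
    by (rule admissible_decompI) (use \<gamma>_cont piece in auto)
  have "integral {0..1} (chart_speed c \<gamma> 0 1) \<le> integral {0..1::real} (\<lambda>_. sqrt L * norm (y2 - y1))"
  proof (rule integral_le[OF chart_speed_integrable[OF piece] integrable_const_ivl])
    fix s :: real assume s: "s \<in> {0..1}"
    have "chart_speed c \<gamma> 0 1 s = sqrt (ch_metric c (linepath y1 y2 s) (y2 - y1) (y2 - y1))"
      using chart_speed_eq[OF piece s] chart_\<gamma>[OF s] by simp
    also have "\<dots> \<le> sqrt (L * (norm (y2 - y1))\<^sup>2)"
      using bnd[OF linepath_in_path[OF s]] by simp
    finally show "chart_speed c \<gamma> 0 1 s \<le> sqrt L * norm (y2 - y1)" by (simp add: real_sqrt_mult)
  qed
  then have "decomp_length \<gamma> 1 real (\<lambda>_. c) \<le> sqrt L * norm (y2 - y1)"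
    by (simp add: decomp_length_eq_sum piece_length_def)
  moreover have "\<gamma> 0 = ch_inv c y1" "\<gamma> 1 = ch_inv c y2" by (simp_all add: \<gamma>_def linepath_0' linepath_1')
  ultimately show ?thesis using that[OF adm] by blast
qed

lemma riem_dist_chart_le:
  assumes c: "c \<in> A" and K: "convex K" "K \<subseteq> ch_map c ` ch_dom c"
    and bnd: "\<And>y v. y \<in> K \<Longrightarrow> ch_metric c y v v \<le> L * (norm v)\<^sup>2"
    and y: "y1 \<in> K" "y2 \<in> K"
  shows "joinable A (ch_inv c y1) (ch_inv c y2)"
    and "riem_dist A (ch_inv c y1) (ch_inv c y2) \<le> sqrt L * dist y1 y2"
proof -
  have seg: "closed_segment y1 y2 \<subseteq> K" using y K(1) by (rule closed_segment_subset)
  obtain \<gamma> n t cs where curve: "admissible_decomp A \<gamma> n t cs" "\<gamma> 0 = ch_inv c y1" "\<gamma> 1 = ch_inv c y2"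
      and length: "decomp_length \<gamma> n t cs \<le> sqrt L * norm (y2 - y1)"
  proof (rule chart_segment_curve[OF c order_trans[OF seg K(2)]])
    show "ch_metric c y (y2 - y1) (y2 - y1) \<le> L * (norm (y2 - y1))\<^sup>2"
      if "y \<in> closed_segment y1 y2" for y
      using bnd seg that by blast
  qed
  then show "joinable A (ch_inv c y1) (ch_inv c y2)"
    unfolding joinable_def by blast
  have "riem_dist A (ch_inv c y1) (ch_inv c y2) \<le> sqrt L * norm (y2 - y1)"
    using riem_dist_le_length[OF curve] length by linarith
  then show "riem_dist A (ch_inv c y1) (ch_inv c y2) \<le> sqrt L * dist y1 y2"
    by (simp add: dist_norm norm_minus_commute)
qed

lemma chart_piece_affine:
  assumes piece: "chart_piece A \<gamma>' a b c D" and m: "0 < m"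
    and eq: "\<And>s. s \<in> {(a - k) / m..(b - k) / m} \<Longrightarrow> \<gamma> s = \<gamma>' (m * s + k)"
  shows "chart_piece A \<gamma> ((a - k) / m) ((b - k) / m) c (\<lambda>s. m *\<^sub>R D (m * s + k))"
proof -
  define \<alpha> where "\<alpha> s = m * s + k" for s :: real
  define I where "I = {(a - k) / m..(b - k) / m}"
  have ab: "a < b" and c: "c \<in> A" and dom: "\<gamma>' ` {a..b} \<subseteq> ch_dom c"
    and \<gamma>'_cont: "continuous_on {a..b} \<gamma>'" and D_cont: "continuous_on {a..b} D"
    and der: "\<And>u. u \<in> {a..b} \<Longrightarrow> ((ch_map c \<circ> \<gamma>') has_vector_derivative D u) (at u within {a..b})"
    using piece unfolding chart_piece_def by auto
  have \<alpha>_img: "\<alpha> ` I \<subseteq> {a..b}"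
    using m by (auto simp: \<alpha>_def I_def field_simps)
  have \<alpha>_cont: "continuous_on I \<alpha>" unfolding \<alpha>_def by (intro continuous_intros)
  have \<gamma>_eq: "\<gamma> s = \<gamma>' (\<alpha> s)" if "s \<in> I" for s using eq that by (simp add: \<alpha>_def I_def)
  have "continuous_on I \<gamma>"
    by (rule continuous_on_eq[OF continuous_on_compose[OF \<alpha>_cont continuous_on_subset[OF \<gamma>'_cont \<alpha>_img]]])
      (simp add: \<gamma>_eq)
  moreover have "continuous_on I (\<lambda>s. m *\<^sub>R D (\<alpha> s))"
    by (intro continuous_on_scaleR continuous_on_const
        continuous_on_compose2[OF D_cont \<alpha>_cont \<alpha>_img])
  moreover have "((ch_map c \<circ> \<gamma>) has_vector_derivative m *\<^sub>R D (\<alpha> s)) (at s within I)"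
    if s: "s \<in> I" for s
  proof -
    have "(\<alpha> has_real_derivative m) (at s within I)"
      unfolding \<alpha>_def by (auto intro!: derivative_eq_intros)
    moreover have "((ch_map c \<circ> \<gamma>') has_vector_derivative D (\<alpha> s)) (at (\<alpha> s) within \<alpha> ` I)"
      using has_vector_derivative_within_subset[OF der \<alpha>_img] \<alpha>_img s by blast
    ultimately have "(((ch_map c \<circ> \<gamma>') \<circ> \<alpha>) has_vector_derivative m *\<^sub>R D (\<alpha> s)) (at s within I)"
      unfolding has_real_derivative_iff_has_vector_derivative by (rule vector_diff_chain_within)
    then show ?thesis
      by (rule has_vector_derivative_transform[OF s, rotated]) (simp add: \<gamma>_eq)
  qed
  moreover have "(a - k) / m < (b - k) / m" using ab m by (simp add: divide_strict_right_mono)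
  moreover have "\<gamma> ` I \<subseteq> ch_dom c" using \<gamma>_eq \<alpha>_img dom by fastforce
  ultimately show ?thesis using c unfolding chart_piece_def I_def \<alpha>_def by blast
qed

lemma integral_chart_speed_affine:
  assumes piece: "chart_piece A \<gamma>' a b c D" and m: "0 < m"
    and eq: "\<And>s. s \<in> {(a - k) / m..(b - k) / m} \<Longrightarrow> \<gamma> s = \<gamma>' (m * s + k)"
  shows "integral {(a - k) / m..(b - k) / m} (chart_speed c \<gamma> ((a - k) / m) ((b - k) / m))
       = integral {a..b} (chart_speed c \<gamma>' a b)"
proof -
  define h where "h = chart_speed c \<gamma>' a b"
  have piece': "chart_piece A \<gamma> ((a - k) / m) ((b - k) / m) c (\<lambda>s. m *\<^sub>R D (m * s + k))"
    by (rule chart_piece_affine[OF assms])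
  have "(h has_integral integral {a..b} h) (cbox a b)"
    using chart_speed_integrable[OF piece] unfolding h_def box_real(2) by (rule integrable_integral)
  from has_integral_affinity'[OF this m, of k]
  have "((\<lambda>s. h (m * s + k)) has_integral integral {a..b} h / m) {(a - k) / m..(b - k) / m}"
    by (simp add: divide_inverse mult.commute)
  then have "((\<lambda>s. m * h (m * s + k)) has_integral m * (integral {a..b} h / m))
      {(a - k) / m..(b - k) / m}"
    by (rule has_integral_mult_right)
  then have "((\<lambda>s. m * h (m * s + k)) has_integral integral {a..b} h) {(a - k) / m..(b - k) / m}"
    using m by simp
  moreover have "m * h (m * s + k) = chart_speed c \<gamma> ((a - k) / m) ((b - k) / m) s"
    if s: "s \<in> {(a - k) / m..(b - k) / m}" for s
  proof -
    have "m * s + k \<in> {a..b}" using s m by (auto simp: field_simps)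
    then have "ch_map c (\<gamma>' (m * s + k)) \<in> ch_map c ` ch_dom c"
      using piece unfolding chart_piece_def by blast
    then have "bilinear (ch_metric c (ch_map c (\<gamma>' (m * s + k))))"
      using piece unfolding chart_piece_def by (blast intro: chart_metric_bilinear)
    then show ?thesis
      using chart_speed_eq[OF piece' s] chart_speed_eq[OF piece \<open>m * s + k \<in> {a..b}\<close>] eq[OF s] m
      by (simp add: h_def bilinear_lmul bilinear_rmul real_sqrt_mult)
  qed
  ultimately have "(chart_speed c \<gamma> ((a - k) / m) ((b - k) / m) has_integral integral {a..b} h)
      {(a - k) / m..(b - k) / m}"
    by (rule has_integral_eq[rotated])
  then show ?thesis unfolding h_def by (rule integral_unique)
qed

lemma chart_piece_joinpaths1:
  assumes piece: "chart_piece A \<gamma>1 a b c D" and b: "b \<le> 1"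
  shows "chart_piece A (\<gamma>1 +++ \<gamma>2) (a / 2) (b / 2) c (\<lambda>s. 2 *\<^sub>R D (2 * s))"
    and "integral {a / 2..b / 2} (chart_speed c (\<gamma>1 +++ \<gamma>2) (a / 2) (b / 2))
       = integral {a..b} (chart_speed c \<gamma>1 a b)"
proof -
  have eq: "(\<gamma>1 +++ \<gamma>2) s = \<gamma>1 (2 * s + 0)" if "s \<in> {(a - 0) / 2..(b - 0) / 2}" for s
    using that b by (simp add: joinpaths_def)
  show "chart_piece A (\<gamma>1 +++ \<gamma>2) (a / 2) (b / 2) c (\<lambda>s. 2 *\<^sub>R D (2 * s))"
    using chart_piece_affine[OF piece _ eq] by simp
  show "integral {a / 2..b / 2} (chart_speed c (\<gamma>1 +++ \<gamma>2) (a / 2) (b / 2))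
      = integral {a..b} (chart_speed c \<gamma>1 a b)"
    using integral_chart_speed_affine[OF piece _ eq] by simp
qed

lemma chart_piece_joinpaths2:
  assumes piece: "chart_piece A \<gamma>2 a b c D" and a: "0 \<le> a" and mid: "\<gamma>1 1 = \<gamma>2 0"
  shows "chart_piece A (\<gamma>1 +++ \<gamma>2) ((a + 1) / 2) ((b + 1) / 2) c (\<lambda>s. 2 *\<^sub>R D (2 * s - 1))"
    and "integral {(a + 1) / 2..(b + 1) / 2} (chart_speed c (\<gamma>1 +++ \<gamma>2) ((a + 1) / 2) ((b + 1) / 2))
       = integral {a..b} (chart_speed c \<gamma>2 a b)"
proof -
  have eq: "(\<gamma>1 +++ \<gamma>2) s = \<gamma>2 (2 * s + -1)" if "s \<in> {(a - -1) / 2..(b - -1) / 2}" for s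
  proof (cases "s = 1 / 2")
    case True
    then show ?thesis using mid by (simp only: joinpaths_def) simp
  next
    case False
    then have "\<not> s \<le> 1 / 2" using that a by auto
    then show ?thesis by (simp add: joinpaths_def)
  qed
  show "chart_piece A (\<gamma>1 +++ \<gamma>2) ((a + 1) / 2) ((b + 1) / 2) c (\<lambda>s. 2 *\<^sub>R D (2 * s - 1))"
    using chart_piece_affine[OF piece _ eq] by simp
  show "integral {(a + 1) / 2..(b + 1) / 2} (chart_speed c (\<gamma>1 +++ \<gamma>2) ((a + 1) / 2) ((b + 1) / 2))
      = integral {a..b} (chart_speed c \<gamma>2 a b)"
    using integral_chart_speed_affine[OF piece _ eq] by simp
qed

lemma chart_piece_joinpaths_first:
  assumes adm1: "admissible_decomp A \<gamma>1 n1 t1 c1" and i: "i < n1"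
  obtains D where "chart_piece A (\<gamma>1 +++ \<gamma>2) (join_breaks n1 t1 t2 i) (join_breaks n1 t1 t2 (Suc i))
      (join_charts n1 c1 c2 i) D"
    "piece_length (\<gamma>1 +++ \<gamma>2) (join_breaks n1 t1 t2) (join_charts n1 c1 c2) i = piece_length \<gamma>1 t1 c1 i"
proof -
  obtain D where "chart_piece A \<gamma>1 (t1 i) (t1 (Suc i)) (c1 i) D"
    using admissible_decomp_piece[OF adm1 i] by blast
  note joined = chart_piece_joinpaths1[OF this admissible_decomp_bounds(2)[OF adm1, of "Suc i"], of \<gamma>2]
  show ?thesis
    using joined i by (intro that) (simp_all add: join_breaks_def join_charts_def piece_length_def)
qed

lemma chart_piece_joinpaths_second:
  assumes adm1: "admissible_decomp A \<gamma>1 n1 t1 c1" and adm2: "admissible_decomp A \<gamma>2 n2 t2 c2"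
    and mid: "\<gamma>1 1 = \<gamma>2 0" and j: "j < n2"
  obtains D where "chart_piece A (\<gamma>1 +++ \<gamma>2) (join_breaks n1 t1 t2 (n1 + j))
      (join_breaks n1 t1 t2 (Suc (n1 + j))) (join_charts n1 c1 c2 (n1 + j)) D"
    "piece_length (\<gamma>1 +++ \<gamma>2) (join_breaks n1 t1 t2) (join_charts n1 c1 c2) (n1 + j) = piece_length \<gamma>2 t2 c2 j"
proof -
  obtain D where D: "chart_piece A \<gamma>2 (t2 j) (t2 (Suc j)) (c2 j) D"
    using admissible_decomp_piece[OF adm2 j] by blast
  note joined = chart_piece_joinpaths2[of \<gamma>2 _ _ _ D \<gamma>1,
      OF D admissible_decomp_bounds(1)[OF adm2 less_imp_le[OF j]] mid]
  have "t1 n1 = 1" "t2 0 = 0" using adm1 adm2 unfolding admissible_decomp_def by auto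
  then have breaks: "join_breaks n1 t1 t2 (n1 + j) = (t2 j + 1) / 2"
    "join_breaks n1 t1 t2 (Suc (n1 + j)) = (t2 (Suc j) + 1) / 2" "join_charts n1 c1 c2 (n1 + j) = c2 j"
    by (cases j) (simp_all add: join_breaks_def join_charts_def)
  show ?thesis using joined by (rule that[unfolded piece_length_def breaks])
qed

lemma admissible_decomp_joinpaths:
  assumes adm1: "admissible_decomp A \<gamma>1 n1 t1 c1" and adm2: "admissible_decomp A \<gamma>2 n2 t2 c2"
    and mid: "\<gamma>1 1 = \<gamma>2 0"
  shows "admissible_decomp A (\<gamma>1 +++ \<gamma>2) (n1 + n2) (join_breaks n1 t1 t2) (join_charts n1 c1 c2)"
proof (rule admissible_decompI)
  show "continuous_on {0..1} (\<gamma>1 +++ \<gamma>2)"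
    using path_join_imp[of \<gamma>1 \<gamma>2] adm1 adm2 mid
    unfolding path_def pathstart_def pathfinish_def admissible_decomp_def by blast
  show "join_breaks n1 t1 t2 0 = 0" "join_breaks n1 t1 t2 (n1 + n2) = 1"
    using adm1 adm2 admissible_decomp_pos[OF adm2]
    unfolding admissible_decomp_def by (auto simp: join_breaks_def)
  show "\<exists>D. chart_piece A (\<gamma>1 +++ \<gamma>2) (join_breaks n1 t1 t2 i) (join_breaks n1 t1 t2 (Suc i))
      (join_charts n1 c1 c2 i) D" if "i < n1 + n2" for i
  proof (cases "i < n1")
    case True
    then show ?thesis using chart_piece_joinpaths_first[OF adm1] by metis
  next
    case False
    then have "i = n1 + (i - n1)" "i - n1 < n2" using that by auto
    then show ?thesis using chart_piece_joinpaths_second[OF adm1 adm2 mid] by metis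
  qed
qed

lemma sum_lessThan_add:
  fixes m n :: nat
  shows "(\<Sum>i<m + n. f i) = (\<Sum>i<m. f i) + (\<Sum>j<n. f (m + j))"
  by (induction n) (simp_all add: add.assoc)

lemma decomp_length_joinpaths:
  assumes adm1: "admissible_decomp A \<gamma>1 n1 t1 c1" and adm2: "admissible_decomp A \<gamma>2 n2 t2 c2"
    and mid: "\<gamma>1 1 = \<gamma>2 0"
  shows "decomp_length (\<gamma>1 +++ \<gamma>2) (n1 + n2) (join_breaks n1 t1 t2) (join_charts n1 c1 c2)
    = decomp_length \<gamma>1 n1 t1 c1 + decomp_length \<gamma>2 n2 t2 c2"
  unfolding decomp_length_eq_sum sum_lessThan_add
proof (intro arg_cong2[where f = "(+)"] sum.cong refl)
  show "piece_length (\<gamma>1 +++ \<gamma>2) (join_breaks n1 t1 t2) (join_charts n1 c1 c2) i = piece_length \<gamma>1 t1 c1 i"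
    if "i \<in> {..<n1}" for i
    using chart_piece_joinpaths_first[OF adm1, of i] that by blast
  show "piece_length (\<gamma>1 +++ \<gamma>2) (join_breaks n1 t1 t2) (join_charts n1 c1 c2) (n1 + j) = piece_length \<gamma>2 t2 c2 j"
    if "j \<in> {..<n2}" for j
    using chart_piece_joinpaths_second[OF adm1 adm2 mid, of j] that by blast
qed

lemma joinpaths_0_1: "(\<gamma>1 +++ \<gamma>2) 0 = \<gamma>1 0" "(\<gamma>1 +++ \<gamma>2) 1 = \<gamma>2 1"
  by (simp_all add: joinpaths_def)

lemma joinable_trans:
  assumes "joinable A x y" "joinable A y z"
  shows "joinable A x z"
proof -
  obtain \<gamma>1 n1 t1 c1 \<gamma>2 n2 t2 c2 where
    adm: "admissible_decomp A \<gamma>1 n1 t1 c1" "admissible_decomp A \<gamma>2 n2 t2 c2"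
    and "\<gamma>1 0 = x" "\<gamma>1 1 = y" "\<gamma>2 0 = y" "\<gamma>2 1 = z"
    using assms unfolding joinable_def by blast
  then show ?thesis
    using admissible_decomp_joinpaths[OF adm] joinpaths_0_1 unfolding joinable_def by metis
qed

lemma riem_dist_triangle:
  assumes xy: "joinable A x y" and yz: "joinable A y z"
  shows "riem_dist A x z \<le> riem_dist A x y + riem_dist A y z"
proof -
  have "riem_dist A x z \<le> decomp_length \<gamma>1 n1 t1 c1 + decomp_length \<gamma>2 n2 t2 c2"
    if adm: "admissible_decomp A \<gamma>1 n1 t1 c1" "admissible_decomp A \<gamma>2 n2 t2 c2"
      and ends: "\<gamma>1 0 = x" "\<gamma>1 1 = y" "\<gamma>2 0 = y" "\<gamma>2 1 = z"
    for \<gamma>1 n1 t1 c1 \<gamma>2 n2 t2 c2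
  proof -
    have mid: "\<gamma>1 1 = \<gamma>2 0" using ends by simp
    show ?thesis
      using riem_dist_le_length[OF admissible_decomp_joinpaths[OF adm mid]] decomp_length_joinpaths[OF adm mid]
        ends by (simp add: joinpaths_0_1)
  qed
  then have "riem_dist A x z - decomp_length \<gamma>2 n2 t2 c2 \<le> riem_dist A x y"
    if "admissible_decomp A \<gamma>2 n2 t2 c2" "\<gamma>2 0 = y" "\<gamma>2 1 = z" for \<gamma>2 n2 t2 c2
    using that by (intro riem_dist_greatest[OF xy]) (simp add: algebra_simps)
  then have "riem_dist A x z - riem_dist A x y \<le> riem_dist A y z"
    by (intro riem_dist_greatest[OF yz]) (simp add: algebra_simps)
  then show ?thesis by simp
qed

end

section \<open>Curves leaving a coordinate ball\<close>

lemma norm_telescope_le: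
  fixes F :: "nat \<Rightarrow> 'v::real_normed_vector"
  assumes "\<And>i. i < n \<Longrightarrow> norm (F (Suc i) - F i) \<le> L i"
  shows "norm (F n - F 0) \<le> (\<Sum>i<n. L i)"
proof -
  have "norm (F n - F 0) = norm (\<Sum>i<n. F (Suc i) - F i)" by (simp add: sum_lessThan_telescope)
  also have "\<dots> \<le> (\<Sum>i<n. norm (F (Suc i) - F i))" by (rule norm_sum)
  also have "\<dots> \<le> (\<Sum>i<n. L i)" using assms by (intro sum_mono) simp
  finally show ?thesis .
qed

lemma first_exit_time:
  fixes \<gamma> :: "real \<Rightarrow> 'a::topological_space"
  assumes \<gamma>: "continuous_on {0..1} \<gamma>" and U: "open U" and K: "closed K" "U \<subseteq> K"
    and start: "\<gamma> 0 \<in> U" and finish: "\<gamma> 1 \<notin> U"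
  obtains \<tau> where "0 < \<tau>" "\<tau> \<le> 1" "\<gamma> ` {0..\<tau>} \<subseteq> K" "\<gamma> \<tau> \<notin> U"
proof -
  define E where "E = {0..1} \<inter> \<gamma> -` (- U)"
  define \<tau> where "\<tau> = Inf E"
  have "closed E" unfolding E_def using U by (intro continuous_closed_preimage[OF \<gamma>]) auto
  moreover have E: "1 \<in> E" "bdd_below E" unfolding E_def using finish by (auto intro: bdd_belowI[of _ 0])
  ultimately have "\<tau> \<in> E" unfolding \<tau>_def by (intro closed_contains_Inf) auto
  then have \<tau>: "0 < \<tau>" "\<tau> \<le> 1" "\<gamma> \<tau> \<notin> U"
    using start unfolding E_def by (auto simp: order.order_iff_strict)
  have "\<gamma> s \<in> U" if "s \<in> {0..<\<tau>}" for s
  proof (rule ccontr)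
    assume "\<gamma> s \<notin> U"
    then have "s \<in> E" using that \<tau> unfolding E_def by auto
    then show False using cInf_lower[OF _ E(2), of s] that unfolding \<tau>_def by auto
  qed
  then have "{0..<\<tau>} \<subseteq> {0..\<tau>} \<inter> \<gamma> -` K" using K(2) by fastforce
  moreover have "closed ({0..\<tau>} \<inter> \<gamma> -` K)"
    using \<tau>(2) by (intro continuous_closed_preimage[OF continuous_on_subset[OF \<gamma>]] K) auto
  ultimately have "closure {0..<\<tau>} \<subseteq> {0..\<tau>} \<inter> \<gamma> -` K" by (rule closure_minimal)
  then have "\<gamma> ` {0..\<tau>} \<subseteq> K" using \<tau>(1) by auto
  with \<tau> that show ?thesis by blast
qed

context riemannian
begin

lemma chart_piece_change:
  assumes piece: "chart_piece A \<gamma> a b cs D" and c: "c \<in> A"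
    and sub: "{a..b'} \<subseteq> {a..b}" and dom: "\<gamma> ` {a..b'} \<subseteq> ch_dom c"
  obtains D' where
    "\<And>s. s \<in> {a..b'} \<Longrightarrow> ((ch_map c \<circ> \<gamma>) has_vector_derivative D' s) (at s within {a..b'})"
    "\<And>s. s \<in> {a..b'} \<Longrightarrow> chart_speed cs \<gamma> a b s = sqrt (ch_metric c (ch_map c (\<gamma> s)) (D' s) (D' s))"
proof -
  have cs: "cs \<in> A" and dom_cs: "\<gamma> ` {a..b} \<subseteq> ch_dom cs"
    and der: "\<And>s. s \<in> {a..b} \<Longrightarrow> ((ch_map cs \<circ> \<gamma>) has_vector_derivative D s) (at s within {a..b})"
    using piece unfolding chart_piece_def by auto
  obtain T where T: "\<And>y. y \<in> ch_map cs ` (ch_dom cs \<inter> ch_dom c) \<Longrightarrow>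
        ((ch_map c \<circ> ch_inv cs) has_derivative T y) (at y)"
    and T_metric: "\<And>y v w. y \<in> ch_map cs ` (ch_dom cs \<inter> ch_dom c) \<Longrightarrow>
        ch_metric cs y v w = ch_metric c (ch_map c (ch_inv cs y)) (T y v) (T y w)"
    using chart_transition[OF cs c] by blast
  define D' where "D' s = T (ch_map cs (\<gamma> s)) (D s)" for s
  have overlap: "ch_map cs (\<gamma> s) \<in> ch_map cs ` (ch_dom cs \<inter> ch_dom c)" if "s \<in> {a..b'}" for s
    using that sub dom dom_cs by blast
  have inv: "ch_inv cs (ch_map cs (\<gamma> s)) = \<gamma> s" if "s \<in> {a..b'}" for s
    using chart_map_inv[OF cs] that sub dom_cs by blast
  show ?thesis
  proof (rule that)
    fix s assume s: "s \<in> {a..b'}"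
    have "((ch_map cs \<circ> \<gamma>) has_vector_derivative D s) (at s within {a..b'})"
      using has_vector_derivative_within_subset[OF der sub] s sub by blast
    then have "((ch_map c \<circ> ch_inv cs) \<circ> (ch_map cs \<circ> \<gamma>) has_vector_derivative D' s) (at s within {a..b'})"
      unfolding D'_def
      by (rule vector_derivative_diff_chain_within)
        (use has_derivative_at_withinI[OF T[OF overlap[OF s]]] in \<open>simp add: o_def\<close>)
    then show "((ch_map c \<circ> \<gamma>) has_vector_derivative D' s) (at s within {a..b'})"
      by (rule has_vector_derivative_transform[OF s, rotated]) (simp add: inv)
    show "chart_speed cs \<gamma> a b s = sqrt (ch_metric c (ch_map c (\<gamma> s)) (D' s) (D' s))"
      using chart_speed_eq[OF piece] T_metric[OF overlap[OF s]] inv[OF s] s sub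
      by (auto simp: D'_def)
  qed
qed

lemma chart_piece_displacement_le:
  assumes c: "c \<in> A" and piece: "chart_piece A \<gamma> a b cs D" and ab': "a < b'" "b' \<le> b"
    and inK: "\<And>s. s \<in> {a..b'} \<Longrightarrow> \<gamma> s \<in> ch_dom c \<and> ch_map c (\<gamma> s) \<in> K"
    and lower: "\<And>y v. y \<in> K \<Longrightarrow> l * (norm v)\<^sup>2 \<le> ch_metric c y v v" and l: "0 \<le> l"
  shows "sqrt l * norm (ch_map c (\<gamma> b') - ch_map c (\<gamma> a)) \<le> integral {a..b} (chart_speed cs \<gamma> a b)"
proof -
  have sub: "{a..b'} \<subseteq> {a..b}" using ab' by auto
  obtain D' where der: "\<And>s. s \<in> {a..b'} \<Longrightarrow> ((ch_map c \<circ> \<gamma>) has_vector_derivative D' s) (at s within {a..b'})"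
    and speed: "\<And>s. s \<in> {a..b'} \<Longrightarrow> chart_speed cs \<gamma> a b s = sqrt (ch_metric c (ch_map c (\<gamma> s)) (D' s) (D' s))"
    using chart_piece_change[OF piece c sub] inK by blast
  have ftc: "(D' has_integral (ch_map c (\<gamma> b') - ch_map c (\<gamma> a))) {a..b'}"
    using fundamental_theorem_of_calculus[OF less_imp_le[OF ab'(1)] der] by simp
  have "integral {a..b'} (\<lambda>s. sqrt l *\<^sub>R D' s) = sqrt l *\<^sub>R (ch_map c (\<gamma> b') - ch_map c (\<gamma> a))"
    by (rule integral_unique[OF has_integral_cmul[OF ftc]])
  then have "sqrt l * norm (ch_map c (\<gamma> b') - ch_map c (\<gamma> a)) = norm (integral {a..b'} (\<lambda>s. sqrt l *\<^sub>R D' s))"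
    using l by (simp only: norm_scaleR real_sqrt_ge_zero abs_of_nonneg)
  also have "\<dots> \<le> integral {a..b'} (chart_speed cs \<gamma> a b)"
  proof (rule integral_norm_bound_integral)
    show "(\<lambda>s. sqrt l *\<^sub>R D' s) integrable_on {a..b'}"
      using has_integral_cmul[OF ftc] by blast
    show "chart_speed cs \<gamma> a b integrable_on {a..b'}"
      by (rule integrable_subinterval_real[OF chart_speed_integrable[OF piece] sub])
    fix s assume s: "s \<in> {a..b'}"
    have "sqrt (l * (norm (D' s))\<^sup>2) \<le> chart_speed cs \<gamma> a b s"
      using lower[of _ "D' s"] inK[OF s] speed[OF s] by simp
    then show "norm (sqrt l *\<^sub>R D' s) \<le> chart_speed cs \<gamma> a b s"
      using l by (simp add: real_sqrt_mult)
  qed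
  also have "\<dots> \<le> integral {a..b} (chart_speed cs \<gamma> a b)"
    using chart_speed_integrable[OF piece] chart_speed_nonneg[OF piece]
    by (intro integral_subset_le[OF sub] integrable_subinterval_real[OF _ sub]) auto
  finally show ?thesis .
qed

lemma chart_piece_displacement_until_le:
  assumes c: "c \<in> A" and piece: "chart_piece A \<gamma> a b cs D" and a: "0 \<le> a"
    and inside: "\<And>s. s \<in> {0..\<tau>} \<Longrightarrow> \<gamma> s \<in> ch_dom c \<and> ch_map c (\<gamma> s) \<in> K"
    and lower: "\<And>y v. y \<in> K \<Longrightarrow> l * (norm v)\<^sup>2 \<le> ch_metric c y v v" and l: "0 \<le> l"
  shows "sqrt l * norm (ch_map c (\<gamma> (min b \<tau>)) - ch_map c (\<gamma> (min a \<tau>)))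
    \<le> integral {a..b} (chart_speed cs \<gamma> a b)"
proof (cases "\<tau> \<le> a")
  case True
  moreover have "a < b" using piece unfolding chart_piece_def by simp
  ultimately show ?thesis using integral_chart_speed_nonneg[OF piece] by simp
next
  case False
  have "sqrt l * norm (ch_map c (\<gamma> (min b \<tau>)) - ch_map c (\<gamma> a)) \<le> integral {a..b} (chart_speed cs \<gamma> a b)"
  proof (rule chart_piece_displacement_le[OF c piece _ _ _ lower l])
    show "\<gamma> s \<in> ch_dom c \<and> ch_map c (\<gamma> s) \<in> K" if "s \<in> {a..min b \<tau>}" for s
      using inside that a by auto
  qed (use False piece in \<open>auto simp: chart_piece_def\<close>)
  with False show ?thesis by simp
qed

lemma chart_ball_exit_time:
  fixes \<gamma> :: "real \<Rightarrow> 'a"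
  assumes c: "c \<in> A" and cb: "cball y0 \<rho> \<subseteq> ch_map c ` ch_dom c" and \<rho>: "0 < \<rho>"
    and \<gamma>: "continuous_on {0..1} \<gamma>" and start: "\<gamma> 0 = ch_inv c y0"
    and finish: "\<gamma> 1 \<notin> ch_dom c \<inter> ch_map c -` ball y0 \<rho>"
  obtains \<tau> where "0 < \<tau>" "\<tau> \<le> 1"
    "\<And>s. s \<in> {0..\<tau>} \<Longrightarrow> \<gamma> s \<in> ch_dom c \<and> ch_map c (\<gamma> s) \<in> cball y0 \<rho>"
    "dist y0 (ch_map c (\<gamma> \<tau>)) = \<rho>"
proof -
  define U where "U = ch_dom c \<inter> ch_map c -` ball y0 \<rho>"
  define K where "K = ch_inv c ` cball y0 \<rho>"
  have K_chart: "w \<in> ch_dom c \<and> ch_map c w \<in> cball y0 \<rho>" if "w \<in> K" for w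
  proof -
    obtain y where y: "y \<in> cball y0 \<rho>" "w = ch_inv c y" using \<open>w \<in> K\<close> unfolding K_def by blast
    then have "y \<in> ch_map c ` ch_dom c" using cb by blast
    then show ?thesis using y chart_inv_in_dom[OF c] by simp
  qed
  have "y0 \<in> ch_map c ` ch_dom c" using cb \<rho> by auto
  then have "\<gamma> 0 \<in> U" using chart_inv_in_dom[OF c] \<rho> unfolding U_def start by simp
  moreover have "compact K"
    unfolding K_def using continuous_on_subset[OF homeomorphism_cont2[OF chart_homeomorphism[OF c]] cb]
    by (rule compact_continuous_image[OF _ compact_cball])
  moreover have "U \<subseteq> K"
  proof
    fix w assume "w \<in> U"
    then have "w = ch_inv c (ch_map c w)" "ch_map c w \<in> cball y0 \<rho>"
      using chart_map_inv[OF c] unfolding U_def by auto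
    then show "w \<in> K" unfolding K_def by (rule image_eqI)
  qed
  moreover have "open U" unfolding U_def by (rule open_chart_preimage[OF c open_ball])
  moreover have "\<gamma> 1 \<notin> U" using finish unfolding U_def .
  ultimately obtain \<tau> where \<tau>: "0 < \<tau>" "\<tau> \<le> 1" "\<gamma> ` {0..\<tau>} \<subseteq> K" "\<gamma> \<tau> \<notin> U"
    using first_exit_time[OF \<gamma>, of U K] compact_imp_closed by blast
  have "\<gamma> s \<in> ch_dom c \<and> ch_map c (\<gamma> s) \<in> cball y0 \<rho>" if "s \<in> {0..\<tau>}" for s
    using K_chart \<tau>(3) that by blast
  moreover from this[of \<tau>] have "dist y0 (ch_map c (\<gamma> \<tau>)) = \<rho>"
    using \<tau> unfolding U_def by auto
  ultimately show ?thesis using that \<tau>(1,2) by blast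
qed

text \<open>Until the curve first leaves the coordinate ball, its length dominates \<open>sqrt l\<close> times the
  Euclidean length of its chart image, and the latter is at least the radius.\<close>

lemma chart_exit_length_ge:
  assumes c: "c \<in> A" and cb: "cball y0 \<rho> \<subseteq> ch_map c ` ch_dom c" and \<rho>: "0 < \<rho>"
    and lower: "\<And>y v. y \<in> cball y0 \<rho> \<Longrightarrow> l * (norm v)\<^sup>2 \<le> ch_metric c y v v" and l: "0 \<le> l"
    and adm: "admissible_decomp A \<gamma> n t cs" and start: "\<gamma> 0 = ch_inv c y0"
    and finish: "\<gamma> 1 \<notin> ch_dom c \<inter> ch_map c -` ball y0 \<rho>"
  shows "sqrt l * \<rho> \<le> decomp_length \<gamma> n t cs"
proof -
  have \<gamma>: "continuous_on {0..1} \<gamma>" and t: "t 0 = 0" "t n = 1"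
    using adm unfolding admissible_decomp_def by auto
  obtain \<tau> where \<tau>: "0 < \<tau>" "\<tau> \<le> 1"
    and inside: "\<And>s. s \<in> {0..\<tau>} \<Longrightarrow> \<gamma> s \<in> ch_dom c \<and> ch_map c (\<gamma> s) \<in> cball y0 \<rho>"
    and exit: "dist y0 (ch_map c (\<gamma> \<tau>)) = \<rho>"
    by (rule chart_ball_exit_time[OF c cb \<rho> \<gamma> start finish]) (rule that)
  define F where "F i = sqrt l *\<^sub>R ch_map c (\<gamma> (min (t i) \<tau>))" for i
  have "norm (F (Suc i) - F i) \<le> piece_length \<gamma> t cs i" if i: "i < n" for i
  proof -
    obtain D where piece: "chart_piece A \<gamma> (t i) (t (Suc i)) (cs i) D"
      using admissible_decomp_piece[OF adm i] by blast
    have "0 \<le> t i" using admissible_decomp_bounds[OF adm, of i] i by simp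
    from chart_piece_displacement_until_le[OF c piece this inside lower l]
    show ?thesis using l by (simp add: F_def piece_length_def scaleR_diff_right[symmetric])
  qed
  then have "norm (F n - F 0) \<le> decomp_length \<gamma> n t cs"
    unfolding decomp_length_eq_sum by (rule norm_telescope_le)
  moreover have "y0 \<in> ch_map c ` ch_dom c" using cb \<rho> by auto
  then have "F n - F 0 = sqrt l *\<^sub>R (ch_map c (\<gamma> \<tau>) - y0)"
    using t \<tau>(1,2) start chart_inv_in_dom(2)[OF c] by (simp add: F_def scaleR_diff_right)
  ultimately show ?thesis
    using exit l by (simp add: dist_norm norm_minus_commute)
qed

lemma riem_dist_chart_ge:
  assumes c: "c \<in> A" and cb: "cball y0 R \<subseteq> ch_map c ` ch_dom c"
    and lower: "\<And>y v. y \<in> cball y0 R \<Longrightarrow> l * (norm v)\<^sup>2 \<le> ch_metric c y v v" and l: "0 \<le> l"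
    and y: "y \<in> cball y0 R" and join: "joinable A (ch_inv c y0) (ch_inv c y)"
  shows "sqrt l * dist y0 y \<le> riem_dist A (ch_inv c y0) (ch_inv c y)"
proof (cases "y = y0")
  case True
  then show ?thesis using riem_dist_nonneg[OF join] by simp
next
  case False
  then have \<rho>: "0 < dist y0 y" by simp
  have sub: "cball y0 (dist y0 y) \<subseteq> cball y0 R" using y by auto
  have "ch_map c (ch_inv c y) = y"
    using homeomorphism_apply2[OF chart_homeomorphism[OF c]] cb y by blast
  then have finish: "ch_inv c y \<notin> ch_dom c \<inter> ch_map c -` ball y0 (dist y0 y)" by simp
  show ?thesis
  proof (rule riem_dist_greatest[OF join])
    fix \<gamma> n t cs
    assume "admissible_decomp A \<gamma> n t cs" "\<gamma> 0 = ch_inv c y0" "\<gamma> 1 = ch_inv c y"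
    moreover have "l * (norm v)\<^sup>2 \<le> ch_metric c y' v v" if "y' \<in> cball y0 (dist y0 y)" for y' v
      using lower sub that by blast
    ultimately show "sqrt l * dist y0 y \<le> decomp_length \<gamma> n t cs"
      using chart_exit_length_ge[OF c order_trans[OF sub cb] \<rho> _ l] finish by simp
  qed
qed

end

lemma bounded_image_if_locally_bounded:
  fixes f :: "'a::topological_space \<Rightarrow> 'b::metric_space"
  assumes S: "compact S" and local: "\<And>x. x \<in> S \<Longrightarrow> \<exists>U. open U \<and> x \<in> U \<and> bounded (f ` U)"
  shows "bounded (f ` S)"
proof -
  have "\<forall>x\<in>S. \<exists>U. open U \<and> x \<in> U \<and> bounded (f ` U)" using local by blast
  from bchoice[OF this] obtain U where U: "\<forall>x\<in>S. open (U x) \<and> x \<in> U x \<and> bounded (f ` U x)"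
    by blast
  obtain X where X: "X \<subseteq> S" "finite X" "S \<subseteq> (\<Union>x\<in>X. U x)"
  proof (rule compactE_image[OF S, of S U])
    show "open (U x)" if "x \<in> S" for x using U that by blast
    show "S \<subseteq> (\<Union>x\<in>S. U x)" using U by blast
  qed (rule that)
  then have "f ` S \<subseteq> (\<Union>x\<in>X. f ` U x)" by blast
  moreover have "bounded (\<Union>x\<in>X. f ` U x)" using X U by (intro bounded_UN) auto
  ultimately show ?thesis by (rule bounded_subset[rotated])
qed

context riemannian
begin

lemma riem_dist_self: "joinable A x x" "riem_dist A x x = 0"
proof -
  obtain c R l L where c: "c \<in> A" "x \<in> ch_dom c" "0 < R" "cball (ch_map c x) R \<subseteq> ch_map c ` ch_dom c"
    and upper: "\<And>y v. y \<in> cball (ch_map c x) R \<Longrightarrow> ch_metric c y v v \<le> L * (norm v)\<^sup>2"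
    by (rule chart_ball_metric_bounds[of x]) (rule that)
  have centre: "ch_map c x \<in> cball (ch_map c x) R" using c(3) by simp
  note close = riem_dist_chart_le[OF c(1) convex_cball c(4) upper centre centre]
  then show "joinable A x x" using chart_map_inv[OF c(1,2)] by simp
  then show "riem_dist A x x = 0"
    using close(2) chart_map_inv[OF c(1,2)] riem_dist_nonneg by (simp add: order.antisym)
qed

lemma joinable_neighbourhood:
  obtains N C where "open N" "x \<in> N" "\<And>w. w \<in> N \<Longrightarrow> joinable A x w"
    "\<And>w. w \<in> N \<Longrightarrow> joinable A w x" "\<And>w. w \<in> N \<Longrightarrow> riem_dist A x w \<le> C"
proof -
  obtain c R l L where c: "c \<in> A" "x \<in> ch_dom c" "0 < R" "cball (ch_map c x) R \<subseteq> ch_map c ` ch_dom c"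
    and L: "0 < L" and upper: "\<And>y v. y \<in> cball (ch_map c x) R \<Longrightarrow> ch_metric c y v v \<le> L * (norm v)\<^sup>2"
    by (rule chart_ball_metric_bounds[of x]) (rule that)
  define N where "N = ch_dom c \<inter> ch_map c -` ball (ch_map c x) R"
  have "joinable A x w \<and> joinable A w x \<and> riem_dist A x w \<le> sqrt L * R" if "w \<in> N" for w
  proof -
    have w: "w \<in> ch_dom c" "ch_map c w \<in> cball (ch_map c x) R" "dist (ch_map c x) (ch_map c w) \<le> R"
      using that unfolding N_def by auto
    have centre: "ch_map c x \<in> cball (ch_map c x) R" using c(3) by simp
    note outward = riem_dist_chart_le[OF c(1) convex_cball c(4) upper centre w(2)]
    note inward = riem_dist_chart_le[OF c(1) convex_cball c(4) upper w(2) centre]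
    have "sqrt L * dist (ch_map c x) (ch_map c w) \<le> sqrt L * R"
      using w(3) L by (simp add: mult_left_mono)
    then show ?thesis
      using outward inward chart_map_inv[OF c(1)] w(1) c(2) by auto
  qed
  moreover have "open N" unfolding N_def by (rule open_chart_preimage[OF c(1) open_ball])
  moreover have "x \<in> N" unfolding N_def using c by simp
  ultimately show ?thesis by (intro that) blast+
qed

lemma joinable_if_connected:
  assumes "connected (UNIV :: 'a::t2_space set)"
  shows "joinable A z x"
proof -
  have "joinable A z x \<and> joinable A x z"
  proof (rule connected_equivalence_relation[OF assms, where R = "\<lambda>x y. joinable A x y \<and> joinable A y x"])
    show "\<exists>T. openin (top_of_set UNIV) T \<and> a \<in> T \<and> (\<forall>w\<in>T. joinable A a w \<and> joinable A w a)" for a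
    proof -
      obtain N where "open N" "a \<in> N" "\<And>w. w \<in> N \<Longrightarrow> joinable A a w" "\<And>w. w \<in> N \<Longrightarrow> joinable A w a"
        by (rule joinable_neighbourhood[of a]) (rule that)
      then show ?thesis by auto
    qed
  qed (auto intro: joinable_trans)
  then show ?thesis ..
qed

lemma bounded_riem_dist:
  assumes "compact (UNIV :: 'a::t2_space set)" "connected (UNIV :: 'a::t2_space set)"
  shows "bounded (range (riem_dist A z))"
proof (rule bounded_image_if_locally_bounded[OF assms(1)])
  fix x :: "'a::t2_space"
  obtain N C where N: "open N" "x \<in> N" and near: "\<And>w. w \<in> N \<Longrightarrow> joinable A x w"
    "\<And>w. w \<in> N \<Longrightarrow> riem_dist A x w \<le> C"
    by (rule joinable_neighbourhood[of x]) (rule that)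
  have "riem_dist A z w \<in> {0..riem_dist A z x + C}" if "w \<in> N" for w
    using riem_dist_triangle[OF joinable_if_connected[OF assms(2), of z x] near(1)[OF that]] near(2)[OF that]
      riem_dist_nonneg[OF joinable_if_connected[OF assms(2)]] by simp
  then have "bounded (riem_dist A z ` N)"
    by (intro bounded_subset[OF bounded_closed_interval]) blast
  with N show "\<exists>U. open U \<and> x \<in> U \<and> bounded (riem_dist A z ` U)" by blast
qed

lemma riem_dist_accumulates:
  assumes e: "0 < e"
  obtains q where "0 < riem_dist A p q" "riem_dist A p q < e" "riem_dist A q p < e"
proof -
  obtain c R l L where c: "c \<in> A" "p \<in> ch_dom c" "0 < R" "cball (ch_map c p) R \<subseteq> ch_map c ` ch_dom c"
    and l: "0 < l" and L: "0 < L"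
    and lower: "\<And>y v. y \<in> cball (ch_map c p) R \<Longrightarrow> l * (norm v)\<^sup>2 \<le> ch_metric c y v v"
    and upper: "\<And>y v. y \<in> cball (ch_map c p) R \<Longrightarrow> ch_metric c y v v \<le> L * (norm v)\<^sup>2"
    by (rule chart_ball_metric_bounds[of p]) (rule that)
  obtain b :: 'b where b: "b \<in> Basis" using nonempty_Basis by blast
  define \<epsilon> where "\<epsilon> = min R (e / (2 * sqrt L))"
  define y0 where "y0 = ch_map c p"
  define y1 where "y1 = y0 + \<epsilon> *\<^sub>R b"
  have \<epsilon>: "0 < \<epsilon>" "\<epsilon> \<le> R" "sqrt L * \<epsilon> < e"
    using c(3) e L by (auto simp: \<epsilon>_def min_def field_simps)
  have y: "y0 \<in> cball y0 R" "y1 \<in> cball y0 R" "dist y0 y1 = \<epsilon>" "dist y1 y0 = \<epsilon>"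
    using \<epsilon> b c(3) by (auto simp: y1_def dist_norm)
  have p: "ch_inv c y0 = p" unfolding y0_def by (rule chart_map_inv[OF c(1,2)])
  note cb = c(4)[folded y0_def] and lower = lower[folded y0_def] and upper = upper[folded y0_def]
  note outward = riem_dist_chart_le[OF c(1) convex_cball cb upper y(1,2)]
  note inward = riem_dist_chart_le[OF c(1) convex_cball cb upper y(2,1)]
  have "sqrt l * \<epsilon> \<le> riem_dist A p (ch_inv c y1)"
    using riem_dist_chart_ge[OF c(1) cb lower less_imp_le[OF l] y(2) outward(1)] y p by simp
  moreover have "0 < sqrt l * \<epsilon>" using l \<epsilon> by simp
  ultimately show ?thesis
    using that[of "ch_inv c y1"] outward(2) inward(2) y p \<epsilon>(3) by simp
qed

end

section \<open>Nearest points in the Kuratowski embedding\<close>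

lemma abs_diff_le_sup_dist:
  fixes f g :: "'a \<Rightarrow> real"
  assumes "bounded (range f)" "bounded (range g)"
  shows "\<bar>f x - g x\<bar> \<le> sup_dist f g"
proof -
  obtain B where "\<And>x. norm (f x - g x) \<le> B"
    using bounded_minus_comp[OF assms] unfolding bounded_iff by blast
  then have "bdd_above (range (\<lambda>x. \<bar>f x - g x\<bar>))"
    by (intro bdd_aboveI2[of _ _ B]) simp
  then show ?thesis unfolding sup_dist_def by (rule cSUP_upper[OF UNIV_I])
qed

lemma sup_dist_le: "(\<And>x. \<bar>f x - g x\<bar> \<le> C) \<Longrightarrow> sup_dist f g \<le> C"
  unfolding sup_dist_def by (rule cSUP_least) auto

lemma reach_eq_0I:
  assumes nonneg: "\<And>x. x \<in> X \<Longrightarrow> 0 \<le> dst a x"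
    and not_Unp: "\<And>r. 0 < r \<Longrightarrow> \<not> open_ball X dst a r \<subseteq> Unp X dst S"
  shows "reach X dst a S = 0"
proof -
  have "open_ball X dst a 0 = {}" using nonneg unfolding open_ball_def by force
  then have "{ereal r | r. r \<ge> 0 \<and> open_ball X dst a r \<subseteq> Unp X dst S} = {0}"
    using not_Unp by (force simp: order.order_iff_strict zero_ereal_def)
  then show ?thesis unfolding reach_def by simp
qed

lemma not_Unp_if_two_nearest:
  assumes "a \<in> S" "b \<in> S" "a \<noteq> b" "dst x a = dst x b" "\<And>c. c \<in> S \<Longrightarrow> dst x a \<le> dst x c"
  shows "x \<notin> Unp X dst S"
proof -
  have "set_dist dst x S = dst x a"
    unfolding set_dist_def using assms(1,5) by (intro cInf_eq_minimum) auto
  then show ?thesis unfolding Unp_def using assms(1-4) by auto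
qed

lemma kuratowski_two_nearest:
  fixes d :: "'a \<Rightarrow> 'a \<Rightarrow> real"
  assumes nonneg: "\<And>x y. 0 \<le> d x y" and self: "\<And>x. d x x = 0"
    and bdd: "\<And>x. bounded (range (d x))" and pq: "d p \<noteq> d q"
  obtains f where "f \<in> Linf" "sup_dist (d p) f \<le> sup_dist (d p) (d q) / 2"
    "f \<notin> Unp Linf sup_dist (range d)"
proof -
  define \<rho> where "\<rho> = sup_dist (d p) (d q) / 2"
  define f where "f x = max \<rho> (max (d p x) (d q x) - \<rho>)" for x
  have diff: "\<bar>d p x - d q x\<bar> \<le> 2 * \<rho>" for x
    unfolding \<rho>_def using abs_diff_le_sup_dist[OF bdd bdd] by simp
  obtain x where "d p x \<noteq> d q x" using pq by blast
  then have \<rho>: "0 < \<rho>" using diff[of x] by linarith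
  have near: "\<bar>f x - d p x\<bar> \<le> \<rho>" "\<bar>f x - d q x\<bar> \<le> \<rho>" for x
    using diff[of x] nonneg[of p x] nonneg[of q x] unfolding f_def by (auto simp: max_def abs_le_iff)
  obtain B where B: "\<And>x. \<bar>d p x\<bar> \<le> B" using bdd[of p] unfolding bounded_iff by auto
  have "\<bar>f x\<bar> \<le> B + \<rho>" for x using near(1)[of x] B[of x] by linarith
  then have f: "bounded (range f)" unfolding bounded_iff by auto
  have far: "\<rho> \<le> sup_dist f (d z)" for z
    using abs_diff_le_sup_dist[OF f bdd, of z z] \<rho> self[of z] by (simp add: f_def)
  have "sup_dist f (d p) = \<rho>" "sup_dist f (d q) = \<rho>"
    using sup_dist_le[of f "d p" \<rho>] sup_dist_le[of f "d q" \<rho>] near far[of p] far[of q] by fastforce+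
  then have "f \<notin> Unp Linf sup_dist (range d)"
    using far pq by (intro not_Unp_if_two_nearest[of "d p" _ "d q"]) auto
  moreover have "sup_dist (d p) f \<le> \<rho>"
    using near(1) by (intro sup_dist_le) (simp add: abs_minus_commute)
  moreover have "f \<in> Linf" using f unfolding Linf_def by simp
  ultimately show ?thesis using that \<rho>_def by blast
qed

lemma reach_kuratowski_eq_0:
  fixes d :: "'a \<Rightarrow> 'a \<Rightarrow> real"
  assumes nonneg: "\<And>x y. 0 \<le> d x y" and self: "\<And>x. d x x = 0"
    and triangle: "\<And>x y z. d x z \<le> d x y + d y z" and bdd: "\<And>x. bounded (range (d x))"
    and accumulates: "\<And>e. 0 < e \<Longrightarrow> \<exists>q. 0 < d p q \<and> d p q < e \<and> d q p < e"
  shows "reach Linf sup_dist (d p) (range d) = 0"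
proof (rule reach_eq_0I)
  show "0 \<le> sup_dist (d p) g" if "g \<in> Linf" for g
  proof -
    have "bounded (range g)" using that unfolding Linf_def by simp
    then have "\<bar>d p p - g p\<bar> \<le> sup_dist (d p) g" by (rule abs_diff_le_sup_dist[OF bdd])
    then show ?thesis by (rule order_trans[OF abs_ge_zero])
  qed
  fix r :: real assume r: "0 < r"
  obtain q where q: "0 < d p q" "d p q < 2 * r" "d q p < 2 * r" using accumulates[of "2 * r"] r by auto
  have "\<bar>d p x - d q x\<bar> \<le> max (d p q) (d q p)" for x
    using triangle[of p x q] triangle[of q x p] by linarith
  then have "sup_dist (d p) (d q) \<le> max (d p q) (d q p)" by (rule sup_dist_le)
  then have pq: "sup_dist (d p) (d q) < 2 * r" using q by linarith
  have "d p q \<noteq> d q q" using q(1) self[of q] by simp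
  then have "d p \<noteq> d q" by auto
  then obtain f where "f \<in> Linf" "sup_dist (d p) f \<le> sup_dist (d p) (d q) / 2"
      "f \<notin> Unp Linf sup_dist (range d)"
    by (rule kuratowski_two_nearest[OF nonneg self bdd])
  then show "\<not> open_ball Linf sup_dist (d p) r \<subseteq> Unp Linf sup_dist (range d)"
    using pq unfolding open_ball_def by fastforce
qed

theorem theorem1p6:
  fixes A :: "('a::t2_space, 'b::euclidean_space) rchart set"
    and p :: 'a
  assumes "closed_connected_riemannian_manifold A"
  shows "reach Linf sup_dist (kuratowski A p) (range (kuratowski A)) = 0"
proof -
  have compact: "compact (UNIV :: 'a set)" and connected: "connected (UNIV :: 'a set)"
    and atlas: "riemannian_atlas A"
    using assms unfolding closed_connected_riemannian_manifold_def by auto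
  interpret riemannian A by (rule riemannian.intro[OF atlas])
  have joinable: "joinable A x y" for x y by (rule joinable_if_connected[OF connected])
  have kuratowski: "kuratowski A = riem_dist A" by (simp add: fun_eq_iff kuratowski_def)
  show ?thesis
    unfolding kuratowski
  proof (rule reach_kuratowski_eq_0)
    show "0 \<le> riem_dist A x y" for x y by (rule riem_dist_nonneg[OF joinable])
    show "riem_dist A x x = 0" for x by (rule riem_dist_self(2))
    show "riem_dist A x z \<le> riem_dist A x y + riem_dist A y z" for x y z
      by (rule riem_dist_triangle[OF joinable joinable])
    show "bounded (range (riem_dist A x))" for x by (rule bounded_riem_dist[OF compact connected])
    show "\<exists>q. 0 < riem_dist A p q \<and> riem_dist A p q < e \<and> riem_dist A q p < e" if "0 < e" for e
      by (rule riem_dist_accumulates[OF that]) blast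
  qed
qed

end
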